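(* Let $n\ge2$, $\kappa\ge1$ with $n>\kappa+1$, and let $G\in\mathcal G_{[n;\kappa]}$ be skew-symmetric. Then $c_i(x)=0$ for every profile $x\in\{1,\dots,\kappa\}^n$ and every $i=1,\dots,n$.
   Context: A finite game $G\in\mathcal G_{[n;\kappa]}$ has players $\{1,\dots,n\}$, each with strategy set $\{1,\dots,\kappa\}$, and payoff functions $c_i:\{1,\dots,\kappa\}^n\to\mathbb R$. $G$ is skew-symmetric if for every permutation $\sigma\in\mathbf S_n$, every $i$ and every profile, $c_i(x_1,\dots,x_n)=\mathrm{sgn}(\sigma)\,c_{\sigma(i)}(x_{\sigma^{-1}(1)},\dots,x_{\sigma^{-1}(n)})$. *)

theory Defs
  imports Complex_Main "HOL-Combinatorics.Permutations" "HOL-Library.FuncSet"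
begin

text \<open>A game in G[n;kappa]: players {1..n}, strategies {1..kappa}; profiles are the
  extensional functions in PiE {1..n} (\<lambda>_. {1..kappa}); payoffs c :: player \<Rightarrow> profile \<Rightarrow> real.\<close>

definition profiles :: "nat \<Rightarrow> nat \<Rightarrow> (nat \<Rightarrow> nat) set" where
  "profiles n \<kappa> = PiE {1..n} (\<lambda>_. {1..\<kappa>})"

definition skew_symmetric :: "nat \<Rightarrow> nat \<Rightarrow> (nat \<Rightarrow> (nat \<Rightarrow> nat) \<Rightarrow> real) \<Rightarrow> bool" where
  "skew_symmetric n \<kappa> c \<longleftrightarrow>
     (\<forall>\<sigma>. \<sigma> permutes {1..n} \<longrightarrow>
       (\<forall>i\<in>{1..n}. \<forall>x\<in>profiles n \<kappa>.
          c i x = of_int (sign \<sigma>) * c (\<sigma> i) (x \<circ> inv \<sigma>)))"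

end

theory Submission
  imports Defs
begin

text \<open>Fix a player i and a profile x. The other n - 1 > \<kappa> players use only \<kappa> strategies, so
  two of them, j and k, play the same one. The transposition of j and k is odd, fixes i and
  leaves x unchanged, so skew-symmetry gives c i x = - c i x.\<close>

lemma profile_has_equal_strategies_off_player:
  assumes "x \<in> profiles n \<kappa>" and "i \<in> {1..n}" and "n > \<kappa> + 1"
  obtains j k where "j \<in> {1..n} - {i}" "k \<in> {1..n} - {i}" "j \<noteq> k" "x j = x k"
proof -
  have strategies: "x ` ({1..n} - {i}) \<subseteq> {1..\<kappa>}"
    using assms(1) unfolding profiles_def by (auto simp: PiE_def Pi_def)
  have "card ({1..n} - {i}) > card {1..\<kappa>}"
    using assms(2,3) by simp
  then have "\<not> inj_on x ({1..n} - {i})"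
    using card_inj_on_le[OF _ strategies] by fastforce
  then show thesis
    using that unfolding inj_on_def by blast
qed

lemma skew_symmetric_payoff_zero_if_odd_stabilizer:
  assumes "skew_symmetric n \<kappa> c" and "\<sigma> permutes {1..n}" and "sign \<sigma> = -1"
    and "i \<in> {1..n}" and "\<sigma> i = i"
    and "x \<in> profiles n \<kappa>" and "x \<circ> inv \<sigma> = x"
  shows "c i x = 0"
proof -
  have "c i x = of_int (sign \<sigma>) * c (\<sigma> i) (x \<circ> inv \<sigma>)"
    using assms(1,2,4,6) unfolding skew_symmetric_def by blast
  then have "c i x = - c i x"
    using assms(3,5,7) by simp
  then show ?thesis
    by simp
qed

lemma comp_transpose_eq_if_equal_values:
  assumes "x j = x k"
  shows "x \<circ> transpose j k = x"
  using assms by (auto simp: transpose_def)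

theorem proposition4p1:
  fixes n \<kappa> :: nat and c :: "nat \<Rightarrow> (nat \<Rightarrow> nat) \<Rightarrow> real"
  assumes "n \<ge> 2" and "\<kappa> \<ge> 1" and "n > \<kappa> + 1"
    and "skew_symmetric n \<kappa> c"
  shows "\<forall>x\<in>profiles n \<kappa>. \<forall>i\<in>{1..n}. c i x = 0"
proof (intro ballI)
  fix x i
  assume x: "x \<in> profiles n \<kappa>" and i: "i \<in> {1..n}"
  obtain j k where jk: "j \<in> {1..n} - {i}" "k \<in> {1..n} - {i}" "j \<noteq> k" "x j = x k"
    using profile_has_equal_strategies_off_player[OF x i assms(3)] .
  show "c i x = 0"
  proof (rule skew_symmetric_payoff_zero_if_odd_stabilizer[OF assms(4) _ _ i _ x])
    show "transpose j k permutes {1..n}"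
      using jk by (intro permutes_swap_id) auto
    show "sign (transpose j k) = -1"
      using jk(3) by (simp add: sign_swap_id)
    show "transpose j k i = i"
      using jk by auto
    show "x \<circ> inv (transpose j k) = x"
      using comp_transpose_eq_if_equal_values[of x j k] jk(4) by simp
  qed
qed

end
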